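(* Let $k>0$, $M>0$, $\beta\in\,]0,\tfrac12[$ and $P_0=\max\{10,(\frac{1+M}{4\pi})^{4/3},\frac{64(k+1)^2}{1-2\beta},\frac{256(k+1)^2M^4}{(1-2\beta)^2}\}$. Let $f\ge0$ be spherically symmetric with $f\in\tilde{\mathcal A}_{M,\beta}$. Then there is a spherically symmetric function $\tilde f\ge0$ such that $\rho_{\tilde f}=\rho_f$ (in particular $\tilde f\in\tilde{\mathcal A}_{M,\beta}$), $\mathcal D(\tilde f)\le\mathcal D(f)$, $\tilde f(x,v)\le1$ for all $(x,v)$, and $$\int_{\mathbb R^3}\int_{|v|\ge P+1}\sqrt{1+|v|^2}\,\tilde f\,dx\,dv\le\frac{2}{P^{1/4}}\quad\text{for all } P\ge P_0+1.$$
   Context: Let $\chi(s)=\frac{k}{k+1}s^{1+1/k}$. A measurable $f\ge0$ on $\mathbb R^3\times\mathbb R^3$ is spherically symmetric if $f(Ax,Av)=f(x,v)$ for all $A\in SO(3)$. For such $f$: $\rho_f(x)=\int\sqrt{1+|v|^2}f(x,v)\,dv$ (radial, written $\rho_f(r)$), $m_f(r)=\int_{|x|\le r}\int\sqrt{1+|v|^2}f\,dx\,dv$, $\lambda_f$ given by $e^{-2\lambda_f(r)}=1-2m_f(r)/r$, and $\mathcal D(f)=\int\int e^{\lambda_f(|x|)}(\chi(f)-f)\,dx\,dv$. $\tilde{\mathcal A}_{M,\beta}$ is the set of measurable spherically symmetric $f\ge0$ with $\int\int\sqrt{1+|v|^2}f\,dx\,dv=M$, $m_f(r)/r\le\beta$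 for $r\in\,]0,\infty[$, and $\rho_f(r)\le1$ for $r\in[0,\infty[$. *)

theory Defs
  imports "HOL-Analysis.Analysis"
begin

type_synonym phase = "real^3 \<Rightarrow> real^3 \<Rightarrow> real"

definition chi :: "real \<Rightarrow> real \<Rightarrow> real" where
  "chi k s = k / (k + 1) * s powr (1 + 1 / k)"

definition SO3 :: "(real^3^3) set" where
  "SO3 = {A. orthogonal_matrix A \<and> det A = 1}"

definition sph_sym :: "phase \<Rightarrow> bool" where
  "sph_sym f \<longleftrightarrow> (\<forall>A\<in>SO3. \<forall>x v. f (A *v x) (A *v v) = f x v)"

definition meas_phase :: "phase \<Rightarrow> bool" where
  "meas_phase f \<longleftrightarrow> (\<lambda>(x, v). f x v) \<in> borel_measurable borel"

definition rho :: "phase \<Rightarrow> real^3 \<Rightarrow> ennreal" where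
  "rho f x = (\<integral>\<^sup>+ v. ennreal (sqrt (1 + (norm v)\<^sup>2) * f x v) \<partial>lborel)"

definition mass_in :: "phase \<Rightarrow> real \<Rightarrow> ennreal" where
  "mass_in f r = (\<integral>\<^sup>+ x. indicator (cball 0 r) x * rho f x \<partial>lborel)"

definition total_mass :: "phase \<Rightarrow> ennreal" where
  "total_mass f = (\<integral>\<^sup>+ x. rho f x \<partial>lborel)"

text \<open>e^{lambda_f(r)}, where e^{-2 lambda_f(r)} = 1 - 2 m_f(r)/r (r > 0); value 1 at r = 0.\<close>
definition exp_lambda :: "phase \<Rightarrow> real \<Rightarrow> real" where
  "exp_lambda f r = (if r > 0 then 1 / sqrt (1 - 2 * enn2real (mass_in f r) / r) else 1)"

text \<open>D(f) = int int e^{lambda_f(|x|)} (chi(f) - f) dx dv, as an extended real: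
  (integral of the nonnegative part e^lambda chi(f)) minus (integral of e^lambda f).\<close>
definition Dfun :: "real \<Rightarrow> phase \<Rightarrow> ereal" where
  "Dfun k f =
     enn2ereal (\<integral>\<^sup>+ x. \<integral>\<^sup>+ v. ennreal (exp_lambda f (norm x) * chi k (f x v)) \<partial>lborel \<partial>lborel)
   - enn2ereal (\<integral>\<^sup>+ x. \<integral>\<^sup>+ v. ennreal (exp_lambda f (norm x) * f x v) \<partial>lborel \<partial>lborel)"

definition Aset :: "real \<Rightarrow> real \<Rightarrow> phase set" where
  "Aset M \<beta> = {f. meas_phase f \<and> sph_sym f \<and> (\<forall>x v. f x v \<ge> 0)
      \<and> total_mass f = ennreal M
      \<and> (\<forall>r>0. mass_in f r \<le> ennreal (\<beta> * r))
      \<and> (\<forall>x. rho f x \<le> 1)}"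

definition P0 :: "real \<Rightarrow> real \<Rightarrow> real \<Rightarrow> real" where
  "P0 k M \<beta> = max (max 10 (((1 + M) / (4 * pi)) powr (4/3)))
                    (max (64 * (k + 1)\<^sup>2 / (1 - 2 * \<beta>))
                         (256 * (k + 1)\<^sup>2 * M ^ 4 / (1 - 2 * \<beta>)\<^sup>2))"

end

theory Submission
  imports Defs
begin

text \<open>At every x, replace f(x, \<cdot>) by the profile (1 - \<mu>(x) \<langle>v\<rangle>)_+^k, where
  \<langle>v\<rangle> = sqrt (1 + |v|^2) and \<mu>(x) \<in> [1/(8(k+1)), 1] is chosen so that the profile has
  density \<rho>_f(x). Such a \<mu>(x) exists by the intermediate value theorem: the density of the
  profile depends continuously on \<mu>, vanishes at \<mu> = 1 and is at least 1 \<ge> \<rho>_f(x) at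
  \<mu> = 1/(8(k+1)). As \<rho> is unchanged, so are m and e^\<lambda>. By Young's inequality the profile
  minimises h \<mapsto> \<chi>(h) - (1 - \<mu> \<langle>v\<rangle>) h over h \<ge> 0; multiplying by e^\<lambda> and
  integrating in v, the terms \<mu> \<langle>v\<rangle> h integrate to \<mu> e^\<lambda> \<rho> on both sides, which
  leaves D(g) \<le> D(f) for the new function g. Finally all profiles vanish for
  |v| \<ge> 8(k+1) \<le> P_0, so the tail integral is zero.\<close>

section \<open>Rotation invariance\<close>

lemma lborel_distr_orthogonal_matrix:
  fixes A :: "real^('n::{finite,wellorder})^('n::{finite,wellorder})"
  assumes A: "orthogonal_matrix A"
  shows "distr lborel borel ((*v) A) = lborel"
proof -
  have orth_inv: "orthogonal_transformation ((*v) (transpose A))"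
    using A by (simp add: orthogonal_transformation_matrix orthogonal_matrix_transpose)
  have meas: "(*v) A \<in> borel_measurable borel"
    by (intro borel_measurable_continuous_onI linear_continuous_on matrix_vector_mul_bounded_linear)
  have inv: "transpose A *v (A *v x) = x" "A *v (transpose A *v x) = x" for x
    using A unfolding orthogonal_matrix_def by (metis matrix_vector_mul_assoc matrix_vector_mul_lid)+
  have vimage_eq: "(*v) A -` S = (*v) (transpose A) ` S" for S
    using inv by (auto simp: image_iff) (metis inv(1))
  have "lborel = distr lborel borel ((*v) A)"
  proof (rule lborel_eqI)
    fix l u :: "real^('n::{finite,wellorder})"
    assume lu: "\<And>b. b \<in> Basis \<Longrightarrow> l \<bullet> b \<le> u \<bullet> b"
    have box: "(*v) A -` box l u \<in> sets borel"
      using meas by (simp add: measurable_sets_borel)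
    have "emeasure (distr lborel borel ((*v) A)) (box l u) = emeasure lebesgue ((*v) A -` box l u)"
      using meas box by (simp add: emeasure_distr emeasure_completion main_part_sets)
    also have "\<dots> = measure lebesgue ((*v) (transpose A) ` box l u)"
      using measurable_orthogonal_image[OF orth_inv, of "box l u"]
      unfolding vimage_eq by (simp add: emeasure_eq_measure2 fmeasurableD2)
    also have "\<dots> = measure lebesgue (box l u)"
      using measure_orthogonal_image[OF orth_inv, of "box l u"] by simp
    also have "\<dots> = (\<Prod>b\<in>Basis. (u - l) \<bullet> b)"
      using lu by (simp add: emeasure_eq_measure2 fmeasurableD2 emeasure_completion main_part_sets
          emeasure_lborel_box_eq)
    finally show "emeasure (distr lborel borel ((*v) A)) (box l u) = (\<Prod>b\<in>Basis. (u - l) \<bullet> b)" .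
  qed simp
  then show ?thesis by simp
qed

lemma nn_integral_orthogonal_matrix:
  fixes A :: "real^('n::{finite,wellorder})^('n::{finite,wellorder})"
  assumes "orthogonal_matrix A" and h: "h \<in> borel_measurable borel"
  shows "(\<integral>\<^sup>+ v. h (A *v v) \<partial>lborel) = (\<integral>\<^sup>+ v. h v \<partial>lborel)"
proof -
  have "(*v) A \<in> borel \<rightarrow>\<^sub>M borel"
    by (intro borel_measurable_continuous_onI linear_continuous_on matrix_vector_mul_bounded_linear)
  then have "(\<integral>\<^sup>+ v. h (A *v v) \<partial>lborel) = (\<integral>\<^sup>+ v. h v \<partial>distr lborel borel ((*v) A))"
    using h by (simp add: nn_integral_distr)
  then show ?thesis
    using lborel_distr_orthogonal_matrix[OF assms(1)] by simp
qed

definition energy :: "'a::real_normed_vector \<Rightarrow> real" where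
  "energy v = sqrt (1 + (norm v)\<^sup>2)"

lemma energy_ge_1: "1 \<le> energy v"
  by (simp add: energy_def)

lemma norm_le_energy: "norm v \<le> energy v"
  unfolding energy_def by (simp add: real_le_rsqrt)

lemma borel_measurable_energy [measurable]: "energy \<in> borel_measurable borel"
  unfolding energy_def by (intro borel_measurable_continuous_onI continuous_intros)

lemma energy_orthogonal_matrix:
  fixes A :: "real^'n^'n"
  assumes "orthogonal_matrix A"
  shows "energy (A *v v) = energy v"
proof -
  have "orthogonal_transformation ((*v) A)"
    using assms by (simp add: orthogonal_transformation_matrix)
  then show ?thesis by (simp add: energy_def orthogonal_transformation_norm)
qed

lemma rho_eq_energy: "rho f x = (\<integral>\<^sup>+ v. ennreal (energy v * f x v) \<partial>lborel)"
  by (simp add: rho_def energy_def)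

lemma meas_phase_uncurry:
  "meas_phase f \<Longrightarrow> (\<lambda>p. f (fst p) (snd p)) \<in> borel_measurable (lborel \<Otimes>\<^sub>M lborel)"
  by (simp add: meas_phase_def lborel_prod split_beta')

lemma meas_phase_slice: "meas_phase f \<Longrightarrow> f x \<in> borel_measurable borel"
  using measurable_Pair2[OF meas_phase_uncurry, of f x] by simp

lemma borel_measurable_rho:
  assumes "meas_phase f"
  shows "rho f \<in> borel_measurable borel"
proof -
  note [measurable] = meas_phase_uncurry[OF assms]
  have "(\<lambda>p. ennreal (energy (snd p) * f (fst p) (snd p))) \<in> borel_measurable (lborel \<Otimes>\<^sub>M lborel)"
    by measurable
  then have "(\<lambda>x. \<integral>\<^sup>+ v. ennreal (energy v * f x v) \<partial>lborel) \<in> borel_measurable lborel"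
    by (rule lborel.borel_measurable_nn_integral[unfolded split_beta'])
  then show ?thesis by (simp add: rho_eq_energy[abs_def])
qed

lemma SO3_orthogonal_matrix: "A \<in> SO3 \<Longrightarrow> orthogonal_matrix A"
  by (simp add: SO3_def)

lemma rho_SO3_invariant:
  assumes "sph_sym f" "meas_phase f" "A \<in> SO3"
  shows "rho f (A *v x) = rho f x"
proof -
  have A: "orthogonal_matrix A" using assms(3) by (rule SO3_orthogonal_matrix)
  have "rho f (A *v x) = (\<integral>\<^sup>+ v. ennreal (energy (A *v v) * f (A *v x) (A *v v)) \<partial>lborel)"
    unfolding rho_eq_energy
    by (rule nn_integral_orthogonal_matrix[OF A, symmetric]) (use meas_phase_slice[OF assms(2)] in measurable)
  also have "\<dots> = rho f x"
    using assms(1,3) unfolding rho_eq_energy sph_sym_def energy_orthogonal_matrix[OF A] by simp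
  finally show ?thesis .
qed

section \<open>The profiles (1 - \<mu> \<langle>v\<rangle>)_+^k\<close>

lemma chi_nonneg: "0 \<le> k \<Longrightarrow> 0 \<le> chi k y"
  by (simp add: chi_def)

lemma borel_measurable_chi [measurable]: "chi k \<in> borel_measurable borel"
  unfolding chi_def[abs_def] by measurable

lemma chi_minus_mult_minimal:
  assumes k: "0 < k" and h: "0 \<le> h"
  shows "chi k (max 0 c powr k) - c * max 0 c powr k \<le> chi k h - c * h"
proof (cases "c \<le> 0")
  case True
  have "c * h \<le> 0"
    using True h by (rule mult_nonpos_nonneg)
  moreover have "0 \<le> chi k h"
    using k by (simp add: chi_nonneg)
  moreover have "chi k (max 0 c powr k) = 0"
    using True by (simp add: chi_def)
  ultimately show ?thesis
    using True by simp
next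
  case False
  then have c: "0 < c" by simp
  have "chi k (c powr k) = k / (k + 1) * c powr (k + 1)"
    using k by (simp add: chi_def powr_powr distrib_left)
  moreover have "c * c powr k = c powr (k + 1)"
    using c by (simp add: powr_add)
  ultimately have lhs: "chi k (c powr k) - c * c powr k = - (c powr (k + 1) / (k + 1))"
    using k by (simp add: field_simps)
  have "h * c \<le> h powr (1 + 1/k) / (1 + 1/k) + c powr (k + 1) / (k + 1)"
    by (rule Youngs_inequality) (use k h c in \<open>auto simp: field_simps\<close>)
  moreover have "h powr (1 + 1/k) / (1 + 1/k) = chi k h"
    unfolding chi_def using k by (simp add: field_simps)
  ultimately show ?thesis
    using lhs c by (simp add: mult.commute)
qed

definition profile :: "real \<Rightarrow> real \<Rightarrow> 'a::real_normed_vector \<Rightarrow> real" where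
  "profile k \<mu> v = (max 0 (1 - \<mu> * energy v)) powr k"

definition profile_density :: "real \<Rightarrow> real \<Rightarrow> real" where
  "profile_density k \<mu> = (LINT v|lborel. energy (v::real^3) * profile k \<mu> v)"

lemma profile_nonneg: "0 \<le> profile k \<mu> v"
  by (simp add: profile_def)

lemma profile_le_1:
  assumes "0 \<le> k" "0 \<le> \<mu>"
  shows "profile k \<mu> v \<le> 1"
  unfolding profile_def using assms energy_ge_1[of v]
  by (intro powr_le1) (auto simp: max_def)

lemma energy_profile_nonneg: "0 \<le> energy v * profile k \<mu> v"
  using energy_ge_1[of v] profile_nonneg[of k \<mu> v] by simp

lemma profile_eq_0: "1 \<le> \<mu> * energy v \<Longrightarrow> profile k \<mu> v = 0"
  by (simp add: profile_def)

lemma borel_measurable_profile [measurable]: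
  "profile k \<mu> \<in> borel_measurable (borel :: 'a::euclidean_space measure)"
  unfolding profile_def by measurable

lemma energy_profile_le_indicator:
  assumes "0 \<le> k" "0 < m" "m \<le> \<mu>"
  shows "energy v * profile k \<mu> v \<le> indicator (cball 0 (1/m)) v / m"
proof (cases "1 \<le> \<mu> * energy v")
  case True
  then show ?thesis using assms by (simp add: profile_eq_0)
next
  case False
  have "m * energy v \<le> \<mu> * energy v"
    using assms energy_ge_1[of v] by (intro mult_right_mono) auto
  with False assms have small: "energy v < 1/m"
    by (simp add: field_simps)
  then have "v \<in> cball 0 (1/m)"
    using norm_le_energy[of v] by simp
  moreover have "energy v * profile k \<mu> v \<le> energy v"
    using profile_le_1[of k \<mu> v] energy_ge_1[of v] assms by simp
  ultimately show ?thesis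
    using small by simp
qed

lemma integrable_indicator_cball:
  "integrable lborel (\<lambda>v::'a::euclidean_space. indicator (cball 0 r) v / m :: real)"
  using emeasure_lborel_cball_finite[of "0::'a" r]
  by (intro integrable_divide integrable_real_indicator) simp_all

lemma integrable_energy_profile:
  assumes "0 \<le> k" "0 < m" "m \<le> \<mu>"
  shows "integrable lborel (\<lambda>v::'a::euclidean_space. energy v * profile k \<mu> v)"
proof (rule Bochner_Integration.integrable_bound[OF integrable_indicator_cball])
  show "AE v in lborel. norm (energy v * profile k \<mu> v) \<le> norm (indicator (cball 0 (1/m)) v / m)"
    using energy_profile_le_indicator[OF assms] energy_profile_nonneg assms(2)
    by (intro AE_I2) (simp add: abs_of_nonneg[OF energy_profile_nonneg])
qed simp

lemma continuous_on_profile_density: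
  assumes k: "0 < k" and m: "0 < m"
  shows "continuous_on {m..} (profile_density k)"
  unfolding continuous_on_sequentially
proof (intro allI ballI impI, elim conjE)
  fix \<mu> :: "nat \<Rightarrow> real" and \<mu>' :: real
  assume mem: "\<forall>n. \<mu> n \<in> {m..}" and lim: "\<mu> \<longlonglongrightarrow> \<mu>'"
  show "(profile_density k \<circ> \<mu>) \<longlonglongrightarrow> profile_density k \<mu>'"
    unfolding comp_def profile_density_def
  proof (rule integral_dominated_convergence[OF _ _ integrable_indicator_cball])
    show "AE v in lborel. (\<lambda>n. energy (v::real^3) * profile k (\<mu> n) v) \<longlonglongrightarrow> energy v * profile k \<mu>' v"
    proof (rule AE_I2)
      fix v :: "real^3"
      have "(\<lambda>n. profile k (\<mu> n) v) \<longlonglongrightarrow> profile k \<mu>' v"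
        unfolding profile_def by (rule tendsto_powr') (use k in \<open>auto intro!: tendsto_intros lim\<close>)
      then show "(\<lambda>n. energy v * profile k (\<mu> n) v) \<longlonglongrightarrow> energy v * profile k \<mu>' v"
        by (rule tendsto_mult_left)
    qed
    show "AE v in lborel. norm (energy (v::real^3) * profile k (\<mu> n) v) \<le> indicator (cball 0 (1/m)) v / m"
      for n
      using energy_profile_le_indicator[OF _ m, of k "\<mu> n"] mem k energy_profile_nonneg
      by (intro AE_I2) (simp add: abs_of_nonneg[OF energy_profile_nonneg])
  qed simp_all
qed

lemma profile_density_1: "profile_density k 1 = 0"
proof -
  have "profile k 1 v = 0" for v :: "real^3"
    using energy_ge_1[of v] by (simp add: profile_eq_0)
  then show ?thesis by (simp add: profile_density_def)
qed

lemma exp_le_powr_one_minus: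
  fixes k a :: real
  assumes "0 \<le> k" "0 \<le> a" "a \<le> 1/2"
  shows "exp (- 2 * a * k) \<le> (1 - a) powr k"
proof -
  have "a * (2 * a) \<le> a * 1"
    using assms by (intro mult_left_mono) auto
  then have "- 2 * a \<le> ln (1 - a)"
    using ln_one_minus_pos_lower_bound[of a] assms by (simp add: power2_eq_square)
  then have "k * (- 2 * a) \<le> k * ln (1 - a)"
    using assms(1) by (rule mult_left_mono)
  then show ?thesis
    using assms by (simp add: powr_def mult_ac)
qed

text \<open>Small enough for the profile density to reach 1, so that every density \<rho>_f(x) \<le> 1 is
  attained; large enough for all profiles to vanish once |v| \<ge> 8(k+1), a bound below P_0.\<close>

definition mu_min :: "real \<Rightarrow> real" where
  "mu_min k = 1 / (8 * (k + 1))"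

lemma mu_min_pos: "0 < k \<Longrightarrow> 0 < mu_min k"
  by (simp add: mu_min_def)

lemma mu_min_le_1: "0 < k \<Longrightarrow> mu_min k \<le> 1"
  by (simp add: mu_min_def)

lemma norm_le_3_cube: "(v::real^3) \<in> cbox (vec (-1)) (vec 1) \<Longrightarrow> norm v \<le> 3"
proof -
  assume "v \<in> cbox (vec (-1)) (vec 1)"
  then have "\<bar>v $ i\<bar> \<le> 1" for i
    by (simp add: mem_box_cart abs_le_iff)
  then have "(\<Sum>i\<in>UNIV. \<bar>v $ i\<bar>) \<le> (\<Sum>i\<in>(UNIV::3 set). 1)"
    by (intro sum_mono)
  then show ?thesis
    using norm_le_l1_cart[of v] by simp
qed

lemma exp_neg_1_le_profile_mu_min:
  assumes k: "0 < k" and v: "norm v \<le> 3"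
  shows "exp (-1) \<le> profile k (mu_min k) v"
proof -
  define a where "a = mu_min k * energy v"
  have "1 + (norm v)\<^sup>2 \<le> 4\<^sup>2"
    using power_mono[OF v norm_ge_zero, of 2] by simp
  then have "energy v \<le> sqrt (4\<^sup>2)"
    unfolding energy_def by (rule real_sqrt_le_mono)
  then have "a \<le> mu_min k * 4"
    unfolding a_def using mu_min_pos[OF k] by (intro mult_left_mono) auto
  also have "\<dots> = 1 / (2 * (k + 1))"
    using k by (simp add: mu_min_def field_simps)
  finally have a: "a \<le> 1 / (2 * (k + 1))" .
  have a0: "0 \<le> a"
    unfolding a_def using mu_min_pos[OF k] energy_ge_1[of v] by simp
  have "1 / (2 * (k + 1)) \<le> 1/2"
    using k by (simp add: field_simps)
  then have a_half: "a \<le> 1/2"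
    using a by linarith
  then have "profile k (mu_min k) v = (1 - a) powr k"
    by (simp add: profile_def a_def)
  then have "exp (- 2 * a * k) \<le> profile k (mu_min k) v"
    using exp_le_powr_one_minus[of k a] k a0 a_half by simp
  moreover have "2 * a * k \<le> 2 * (1 / (2 * (k + 1))) * k"
    using a k by (intro mult_right_mono) auto
  moreover have "2 * (1 / (2 * (k + 1))) * k \<le> 1"
    using k by (simp add: field_simps)
  ultimately show ?thesis
    by (simp add: order_trans[where y = "exp (- 2 * a * k)"])
qed

lemma one_le_profile_density_mu_min:
  assumes k: "0 < k"
  shows "1 \<le> profile_density k (mu_min k)"
proof -
  let ?C = "cbox (vec (-1)) (vec 1) :: (real^3) set"
  have "(0::real^3) \<in> ?C"
    by (simp add: mem_box_cart)
  then have "measure lborel ?C = 8"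
    by (subst content_cbox_cart) auto
  then have "exp (-1) * (8::real) = (LINT v|lborel. exp (-1) * indicator ?C v :: real)"
    by simp
  also have "\<dots> \<le> profile_density k (mu_min k)"
    unfolding profile_density_def
  proof (rule integral_mono)
    show "integrable lborel (\<lambda>v. exp (-1) * indicator ?C v :: real)"
      by (intro integrable_mult_right integrable_real_indicator emeasure_lborel_cbox_finite) simp
    show "integrable lborel (\<lambda>v. energy v * profile k (mu_min k) v)"
      using k by (intro integrable_energy_profile[OF _ mu_min_pos[OF k] order_refl]) simp_all
    show "(exp (-1) * indicator ?C v :: real) \<le> energy v * profile k (mu_min k) v" for v :: "real^3"
    proof (cases "v \<in> ?C")
      case True
      then have "exp (-1) \<le> profile k (mu_min k) v"
        by (intro exp_neg_1_le_profile_mu_min[OF k norm_le_3_cube])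
      also have "\<dots> \<le> energy v * profile k (mu_min k) v"
        using energy_ge_1[of v] profile_nonneg[of k "mu_min k" v] by (simp add: mult_le_cancel_right1)
      finally show ?thesis
        using True by simp
    qed (simp add: energy_profile_nonneg)
  qed
  moreover have "1 \<le> exp (-1) * (8::real)"
    using exp_le by (simp add: exp_minus field_simps)
  ultimately show ?thesis by linarith
qed

text \<open>The cut-off max 0 y keeps the set nonempty for every y (it contains 1), which makes
  profile_param k antitone on all of \<real> and therefore Borel measurable.\<close>

definition profile_param :: "real \<Rightarrow> real \<Rightarrow> real" where
  "profile_param k y = Inf {\<mu> \<in> {mu_min k..1}. profile_density k \<mu> \<le> max 0 y}"

lemma profile_param_set:
  fixes y :: real
  assumes "0 < k"
  defines "S \<equiv> {\<mu> \<in> {mu_min k..1}. profile_density k \<mu> \<le> max 0 y}"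
  shows "S \<noteq> {}" "bdd_below S" "closed S"
proof -
  show "S \<noteq> {}"
    using mu_min_le_1[OF assms(1)] profile_density_1[of k] unfolding S_def by force
  show "bdd_below S"
    unfolding S_def by (rule bdd_belowI[of _ "mu_min k"]) auto
  have "continuous_on {mu_min k..1} (profile_density k)"
    by (rule continuous_on_subset[OF continuous_on_profile_density[OF assms(1) mu_min_pos[OF assms(1)]]]) auto
  then show "closed S"
    unfolding S_def using continuous_closed_preimage[of "{mu_min k..1}" "profile_density k" "{..max 0 y}"]
    by (simp add: vimage_def Int_def conj_commute)
qed

lemma profile_param_mem:
  assumes "0 < k"
  shows "profile_param k y \<in> {mu_min k..1}" "profile_density k (profile_param k y) \<le> max 0 y"
  using closed_contains_Inf[OF profile_param_set[OF assms]] unfolding profile_param_def by simp_all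

lemma profile_density_profile_param:
  assumes k: "0 < k" and y: "0 \<le> y" "y \<le> 1"
  shows "profile_density k (profile_param k y) = y"
proof -
  note mem = profile_param_mem[OF k, of y]
  have "\<exists>\<mu>\<ge>mu_min k. \<mu> \<le> profile_param k y \<and> profile_density k \<mu> = y"
  proof (rule IVT2')
    show "profile_density k (profile_param k y) \<le> y"
      using mem y by simp
    show "y \<le> profile_density k (mu_min k)"
      using one_le_profile_density_mu_min[OF k] y by simp
    show "continuous_on {mu_min k..profile_param k y} (profile_density k)"
      by (rule continuous_on_subset[OF continuous_on_profile_density[OF k mu_min_pos[OF k]]]) auto
  qed (use mem in simp)
  then obtain \<mu> where \<mu>: "mu_min k \<le> \<mu>" "\<mu> \<le> profile_param k y" "profile_density k \<mu> = y"
    by blast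
  have "profile_param k y \<le> \<mu>"
    unfolding profile_param_def using \<mu> mem profile_param_set[OF k, of y]
    by (intro cInf_lower) auto
  with \<mu> show ?thesis by simp
qed

lemma antimono_profile_param:
  assumes "0 < k"
  shows "antimono (profile_param k)"
proof (rule antimonoI)
  fix y y' :: real
  assume "y \<le> y'"
  then show "profile_param k y' \<le> profile_param k y"
    unfolding profile_param_def using profile_param_set[OF assms]
    by (intro cInf_superset_mono) auto
qed

lemma borel_measurable_profile_param:
  assumes "0 < k"
  shows "profile_param k \<in> borel_measurable borel"
proof -
  have "mono (\<lambda>y. profile_param k (- y))"
    using antimono_profile_param[OF assms] by (auto simp: mono_def antimono_def)
  then have "(\<lambda>y. profile_param k (- y)) \<in> borel_measurable borel"
    by (rule borel_measurable_mono)
  then have "(\<lambda>y. profile_param k (- (- y))) \<in> borel_measurable borel"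
    by measurable
  then show ?thesis by simp
qed

section \<open>Replacing f by profiles\<close>

definition multiplier :: "real \<Rightarrow> phase \<Rightarrow> real^3 \<Rightarrow> real" where
  "multiplier k f x = profile_param k (enn2real (rho f x))"

definition profile_phase :: "real \<Rightarrow> phase \<Rightarrow> phase" where
  "profile_phase k f x v = profile k (multiplier k f x) v"

lemma multiplier_mem: "0 < k \<Longrightarrow> multiplier k f x \<in> {mu_min k..1}"
  unfolding multiplier_def by (rule profile_param_mem)

lemma multiplier_pos: "0 < k \<Longrightarrow> 0 < multiplier k f x"
  using multiplier_mem[of k f x] mu_min_pos[of k] by simp

lemma borel_measurable_multiplier:
  assumes "0 < k" "meas_phase f"
  shows "multiplier k f \<in> borel_measurable borel"
  unfolding multiplier_def[abs_def]
  using borel_measurable_profile_param[OF assms(1)] borel_measurable_rho[OF assms(2)]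
  by measurable

lemma rho_profile_phase:
  assumes k: "0 < k" and rho_le: "\<And>x. rho f x \<le> 1"
  shows "rho (profile_phase k f) = rho f"
proof
  fix x
  let ?\<mu> = "multiplier k f x"
  have "rho (profile_phase k f) x = (\<integral>\<^sup>+ v. ennreal (energy (v::real^3) * profile k ?\<mu> v) \<partial>lborel)"
    by (simp add: rho_eq_energy profile_phase_def)
  also have "\<dots> = ennreal (profile_density k ?\<mu>)"
    unfolding profile_density_def using multiplier_mem[OF k, of f x] mu_min_pos[OF k] k
    by (intro nn_integral_eq_integral integrable_energy_profile AE_I2 energy_profile_nonneg) auto
  also have "profile_density k ?\<mu> = enn2real (rho f x)"
    unfolding multiplier_def using rho_le[of x]
    by (intro profile_density_profile_param[OF k]) (auto simp: enn2real_leI)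
  also have "ennreal (enn2real (rho f x)) = rho f x"
    using le_less_trans[OF rho_le ennreal_one_less_top] by (simp add: less_top)
  finally show "rho (profile_phase k f) x = rho f x" .
qed

lemma meas_phase_profile_phase:
  assumes "0 < k" "meas_phase f"
  shows "meas_phase (profile_phase k f)"
proof -
  note [measurable] = borel_measurable_multiplier[OF assms]
  have "(\<lambda>p. profile k (multiplier k f (fst p)) (snd p)) \<in> borel_measurable (lborel \<Otimes>\<^sub>M lborel)"
    unfolding profile_def by measurable
  then show ?thesis
    by (simp add: meas_phase_def profile_phase_def split_beta' lborel_prod)
qed

lemma sph_sym_profile_phase:
  assumes "sph_sym f" "meas_phase f"
  shows "sph_sym (profile_phase k f)"
  unfolding sph_sym_def profile_phase_def multiplier_def profile_def
  using rho_SO3_invariant[OF assms] energy_orthogonal_matrix[OF SO3_orthogonal_matrix]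
  by simp

lemma profile_phase_nonneg: "0 \<le> profile_phase k f x v"
  by (simp add: profile_phase_def profile_nonneg)

lemma profile_phase_le_1: "0 < k \<Longrightarrow> profile_phase k f x v \<le> 1"
  unfolding profile_phase_def using multiplier_pos[of k f x] by (intro profile_le_1) simp_all

lemma profile_phase_eq_0:
  assumes k: "0 < k" and v: "8 * (k + 1) \<le> norm v"
  shows "profile_phase k f x v = 0"
proof -
  have "1 = mu_min k * (8 * (k + 1))"
    using k by (simp add: mu_min_def)
  also have "\<dots> \<le> multiplier k f x * energy v"
    using multiplier_mem[OF k, of f x] mu_min_pos[OF k] k v norm_le_energy[of v]
    by (intro mult_mono) auto
  finally show ?thesis
    unfolding profile_phase_def by (rule profile_eq_0)
qed

lemma profile_phase_in_Aset:
  assumes k: "0 < k" and f: "f \<in> Aset M \<beta>"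
  shows "profile_phase k f \<in> Aset M \<beta>"
proof -
  have rho_eq: "rho (profile_phase k f) = rho f"
    using f by (intro rho_profile_phase[OF k]) (simp add: Aset_def)
  have "mass_in (profile_phase k f) = mass_in f" "total_mass (profile_phase k f) = total_mass f"
    unfolding mass_in_def[abs_def] total_mass_def rho_eq by simp_all
  with f rho_eq show ?thesis
    by (auto simp: Aset_def meas_phase_profile_phase[OF k] sph_sym_profile_phase profile_phase_nonneg)
qed

section \<open>The functional D\<close>

lemma ennreal_add_add_mult_le:
  fixes a b c d a' b' d' :: real
  assumes "0 \<le> a" "0 \<le> b" "0 \<le> c" "0 \<le> d" "0 \<le> a'" "0 \<le> b'" "0 \<le> d'"
    and "a + b + c * d \<le> a' + b' + c * d'"
  shows "ennreal a + ennreal b + ennreal c * ennreal d \<le> ennreal a' + ennreal b' + ennreal c * ennreal d'"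
proof -
  have "ennreal a + ennreal b + ennreal c * ennreal d = ennreal (a + b + c * d)"
    using assms by (simp add: ennreal_mult ennreal_plus)
  also have "\<dots> \<le> ennreal (a' + b' + c * d')"
    using assms(8) by (rule ennreal_leI)
  also have "\<dots> = ennreal a' + ennreal b' + ennreal c * ennreal d'"
    using assms by (simp add: ennreal_mult ennreal_plus)
  finally show ?thesis .
qed

lemma enn2ereal_diff_le:
  fixes a b c d :: ennreal
  assumes le: "a + d \<le> c + b" and b: "b < top" and d: "d < top"
  shows "enn2ereal a - enn2ereal b \<le> enn2ereal c - enn2ereal d"
proof (cases c rule: ennreal_cases)
  case top
  then show ?thesis using d by (cases d rule: ennreal_cases) auto
next
  case (real c')
  then have "c + b < top"
    using b by (simp add: less_top[symmetric])
  with le have "a + d < top"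
    by (rule le_less_trans)
  then have a: "a < top" by (simp add: less_top[symmetric])
  obtain a' where a': "a = ennreal a'" "0 \<le> a'"
    using a by (cases a rule: ennreal_cases) auto
  obtain b' where b': "b = ennreal b'" "0 \<le> b'"
    using b by (cases b rule: ennreal_cases) auto
  obtain d' where d': "d = ennreal d'" "0 \<le> d'"
    using d by (cases d rule: ennreal_cases) auto
  have "ennreal (a' + d') \<le> ennreal (c' + b')"
    using le a' b' d' real by (simp add: ennreal_plus)
  then have "a' + d' \<le> c' + b'"
    using real b' by (subst (asm) ennreal_le_iff) auto
  then show ?thesis
    using a' b' d' real by (simp add: enn2ereal_ennreal)
qed

lemma mass_in_mono: "r \<le> r' \<Longrightarrow> mass_in f r \<le> mass_in f r'"
  unfolding mass_in_def by (intro nn_integral_mono) (auto simp: indicator_def)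

lemma mass_in_le_total_mass: "mass_in f r \<le> total_mass f"
  unfolding mass_in_def total_mass_def by (intro nn_integral_mono) (auto simp: indicator_def)

lemma borel_measurable_exp_lambda:
  assumes "total_mass f < top"
  shows "exp_lambda f \<in> borel_measurable borel"
proof -
  have "mono (\<lambda>r. enn2real (mass_in f r))"
    using mass_in_mono le_less_trans[OF mass_in_le_total_mass assms]
    by (intro monoI enn2real_mono) auto
  then have [measurable]: "(\<lambda>r. enn2real (mass_in f r)) \<in> borel_measurable borel"
    by (rule borel_measurable_mono)
  show ?thesis
    unfolding exp_lambda_def[abs_def] by measurable
qed

lemma exp_lambda_bounds:
  assumes mass: "\<And>r. 0 < r \<Longrightarrow> mass_in f r \<le> ennreal (\<beta> * r)" and \<beta>: "0 < \<beta>" "\<beta> < 1/2"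
  shows "1 \<le> exp_lambda f r" "exp_lambda f r \<le> 1 / sqrt (1 - 2 * \<beta>)"
proof -
  have sqrt_pos: "0 < sqrt (1 - 2 * \<beta>)" and sqrt_le_1: "sqrt (1 - 2 * \<beta>) \<le> 1"
    using \<beta> by simp_all
  have "1 \<le> exp_lambda f r \<and> exp_lambda f r \<le> 1 / sqrt (1 - 2 * \<beta>)"
  proof (cases "0 < r")
    case r: True
    define q where "q = 1 - 2 * enn2real (mass_in f r) / r"
    have "enn2real (mass_in f r) \<le> \<beta> * r"
      using enn2real_mono[OF mass[OF r]] \<beta> r by simp
    then have "1 - 2 * \<beta> \<le> q" "q \<le> 1"
      using r by (simp_all add: q_def field_simps)
    then have "sqrt (1 - 2 * \<beta>) \<le> sqrt q" "0 < sqrt q" "sqrt q \<le> 1"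
      using \<beta> by simp_all
    then have "1 \<le> 1 / sqrt q" "1 / sqrt q \<le> 1 / sqrt (1 - 2 * \<beta>)"
      using sqrt_pos by (simp_all add: frac_le)
    then show ?thesis
      using r by (simp add: exp_lambda_def q_def)
  next
    case False
    then show ?thesis
      using sqrt_pos sqrt_le_1 by (simp add: exp_lambda_def)
  qed
  then show "1 \<le> exp_lambda f r" "exp_lambda f r \<le> 1 / sqrt (1 - 2 * \<beta>)"
    by simp_all
qed

lemma borel_measurable_weighted_inner_integral:
  assumes "meas_phase q" "\<phi> \<in> borel_measurable borel" "w \<in> borel_measurable borel"
  shows "(\<lambda>x. \<integral>\<^sup>+ v. ennreal (w (norm x) * \<phi> (q x v)) \<partial>lborel) \<in> borel_measurable lborel"
proof -
  note [measurable] = meas_phase_uncurry[OF assms(1)] assms(2,3)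
  have "(\<lambda>p. ennreal (w (norm (fst p)) * \<phi> (q (fst p) (snd p))))
      \<in> borel_measurable (lborel \<Otimes>\<^sub>M lborel)"
    by measurable
  then show ?thesis
    by (rule lborel.borel_measurable_nn_integral[unfolded split_beta'])
qed

lemma weighted_phase_integral_finite:
  assumes q: "meas_phase q" "\<And>x v. 0 \<le> q x v" "total_mass q < top"
    and w: "\<And>r. w r \<le> C" "0 \<le> C"
  shows "(\<integral>\<^sup>+ x. \<integral>\<^sup>+ v. ennreal (w (norm x) * q x v) \<partial>lborel \<partial>lborel) < top"
proof -
  have "ennreal (w (norm x) * q x v) \<le> ennreal C * ennreal (energy v * q x v)" for x v
  proof -
    have "w (norm x) * q x v \<le> C * (energy v * q x v)"
      using w q(2)[of x v] energy_ge_1[of v]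
      by (intro mult_mono) (auto simp: mult_le_cancel_right1)
    then have "ennreal (w (norm x) * q x v) \<le> ennreal (C * (energy v * q x v))"
      by (rule ennreal_leI)
    also have "\<dots> = ennreal C * ennreal (energy v * q x v)"
      using w(2) q(2)[of x v] energy_ge_1[of v] by (intro ennreal_mult) auto
    finally show ?thesis .
  qed
  then have "(\<integral>\<^sup>+ x. \<integral>\<^sup>+ v. ennreal (w (norm x) * q x v) \<partial>lborel \<partial>lborel)
      \<le> (\<integral>\<^sup>+ x. \<integral>\<^sup>+ v. ennreal C * ennreal (energy v * q x v) \<partial>lborel \<partial>lborel)"
    by (intro nn_integral_mono)
  also have "\<dots> = (\<integral>\<^sup>+ x. ennreal C * rho q x \<partial>lborel)"
    using meas_phase_slice[OF q(1)] by (simp add: nn_integral_cmult rho_eq_energy)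
  also have "\<dots> = ennreal C * total_mass q"
    using borel_measurable_rho[OF q(1)] by (simp add: nn_integral_cmult total_mass_def)
  also have "\<dots> < top"
    using q(3) by (simp add: ennreal_mult_less_top)
  finally show ?thesis .
qed

lemma ennreal_chi_profile_le:
  assumes k: "0 < k" and \<mu>: "0 \<le> \<mu>" and e: "0 \<le> e" and h: "0 \<le> h"
  shows "ennreal (e * chi k (profile k \<mu> v)) + ennreal (e * h) + ennreal (e * \<mu>) * ennreal (energy v * profile k \<mu> v)
    \<le> ennreal (e * chi k h) + ennreal (e * profile k \<mu> v) + ennreal (e * \<mu>) * ennreal (energy v * h)"
proof (rule ennreal_add_add_mult_le)
  have "chi k (profile k \<mu> v) - (1 - \<mu> * energy v) * profile k \<mu> v \<le> chi k h - (1 - \<mu> * energy v) * h"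
    unfolding profile_def by (rule chi_minus_mult_minimal[OF k h])
  from mult_left_mono[OF this e]
  show "e * chi k (profile k \<mu> v) + e * h + e * \<mu> * (energy v * profile k \<mu> v)
      \<le> e * chi k h + e * profile k \<mu> v + e * \<mu> * (energy v * h)"
    by (simp add: algebra_simps)
qed (use e \<mu> h k in \<open>auto intro!: mult_nonneg_nonneg chi_nonneg profile_nonneg
    order_trans[OF zero_le_one energy_ge_1]\<close>)

lemma nn_integral_chi_profile_phase_le:
  assumes k: "0 < k" and f: "meas_phase f" "\<And>x v. 0 \<le> f x v" "\<And>x. rho f x \<le> 1" and e: "0 \<le> e"
  shows "(\<integral>\<^sup>+ v. ennreal (e * chi k (profile_phase k f x v)) \<partial>lborel)
      + (\<integral>\<^sup>+ v. ennreal (e * f x v) \<partial>lborel)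
    \<le> (\<integral>\<^sup>+ v. ennreal (e * chi k (f x v)) \<partial>lborel)
      + (\<integral>\<^sup>+ v. ennreal (e * profile_phase k f x v) \<partial>lborel)"
proof -
  define g where "g = profile_phase k f x"
  define \<mu> where "\<mu> = multiplier k f x"
  note [measurable] = meas_phase_slice[OF f(1), of x]
  have [measurable]: "g \<in> borel_measurable borel"
    unfolding g_def profile_phase_def[abs_def] by simp
  have \<mu>: "0 \<le> \<mu>"
    using multiplier_pos[OF k] unfolding \<mu>_def by (simp add: less_imp_le)
  have pointwise:
    "ennreal (e * chi k (g v)) + ennreal (e * f x v) + ennreal (e * \<mu>) * ennreal (energy v * g v)
      \<le> ennreal (e * chi k (f x v)) + ennreal (e * g v) + ennreal (e * \<mu>) * ennreal (energy v * f x v)"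
    for v
    unfolding g_def profile_phase_def \<mu>_def[symmetric] by (rule ennreal_chi_profile_le[OF k \<mu> e f(2)])
  have "(\<integral>\<^sup>+ v. ennreal (e * chi k (g v)) \<partial>lborel) + (\<integral>\<^sup>+ v. ennreal (e * f x v) \<partial>lborel)
      + ennreal (e * \<mu>) * rho (profile_phase k f) x
    = (\<integral>\<^sup>+ v. ennreal (e * chi k (g v)) + ennreal (e * f x v)
        + ennreal (e * \<mu>) * ennreal (energy v * g v) \<partial>lborel)"
    unfolding rho_eq_energy g_def[symmetric]
    by (subst nn_integral_add nn_integral_cmult, measurable)+
  also have "\<dots> \<le> (\<integral>\<^sup>+ v. ennreal (e * chi k (f x v)) + ennreal (e * g v)
        + ennreal (e * \<mu>) * ennreal (energy v * f x v) \<partial>lborel)"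
    by (intro nn_integral_mono pointwise)
  also have "\<dots> = (\<integral>\<^sup>+ v. ennreal (e * chi k (f x v)) \<partial>lborel) + (\<integral>\<^sup>+ v. ennreal (e * g v) \<partial>lborel)
      + ennreal (e * \<mu>) * rho f x"
    unfolding rho_eq_energy
    by (subst nn_integral_add nn_integral_cmult, measurable)+
  moreover have "rho f x \<noteq> top"
    using le_less_trans[OF f(3) ennreal_one_less_top, of x] by simp
  ultimately show ?thesis
    using rho_profile_phase[OF k f(3)] by (simp add: g_def ennreal_mult_eq_top_iff)
qed

lemma nn_integral_weighted_chi_profile_phase_le:
  assumes k: "0 < k" and f: "meas_phase f" "\<And>x v. 0 \<le> f x v" "\<And>x. rho f x \<le> 1"
    and w: "w \<in> borel_measurable borel" "\<And>r. 0 \<le> w r"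
  shows "(\<integral>\<^sup>+ x. \<integral>\<^sup>+ v. ennreal (w (norm x) * chi k (profile_phase k f x v)) \<partial>lborel \<partial>lborel)
      + (\<integral>\<^sup>+ x. \<integral>\<^sup>+ v. ennreal (w (norm x) * f x v) \<partial>lborel \<partial>lborel)
    \<le> (\<integral>\<^sup>+ x. \<integral>\<^sup>+ v. ennreal (w (norm x) * chi k (f x v)) \<partial>lborel \<partial>lborel)
      + (\<integral>\<^sup>+ x. \<integral>\<^sup>+ v. ennreal (w (norm x) * profile_phase k f x v) \<partial>lborel \<partial>lborel)"
proof -
  have meas: "(\<lambda>x. \<integral>\<^sup>+ v. ennreal (w (norm x) * \<phi> (q x v)) \<partial>lborel) \<in> borel_measurable lborel"
    if "meas_phase q" "\<phi> \<in> borel_measurable borel" for \<phi> q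
    using that w(1) by (rule borel_measurable_weighted_inner_integral)
  have "meas_phase (profile_phase k f)"
    by (rule meas_phase_profile_phase[OF k f(1)])
  with f(1) show ?thesis
    using meas[where \<phi> = "\<lambda>y. y", simplified] meas[where \<phi> = "chi k", simplified]
      nn_integral_chi_profile_phase_le[OF k f w(2)]
    by (simp add: nn_integral_add[symmetric] nn_integral_mono)
qed

lemma Dfun_profile_phase_le:
  assumes k: "0 < k" and f: "f \<in> Aset M \<beta>" and \<beta>: "0 < \<beta>" "\<beta> < 1/2"
  shows "Dfun k (profile_phase k f) \<le> Dfun k f"
proof -
  let ?g = "profile_phase k f" and ?C = "1 / sqrt (1 - 2 * \<beta>)"
  have fm: "meas_phase f" and f0: "\<And>x v. 0 \<le> f x v" and rho_le: "\<And>x. rho f x \<le> 1"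
    and mass: "\<And>r. 0 < r \<Longrightarrow> mass_in f r \<le> ennreal (\<beta> * r)" and tm: "total_mass f = ennreal M"
    using f by (auto simp: Aset_def)
  have "?g \<in> Aset M \<beta>"
    by (rule profile_phase_in_Aset[OF k f])
  then have gm: "meas_phase ?g" and g0: "\<And>x v. 0 \<le> ?g x v" and tmg: "total_mass ?g = ennreal M"
    by (auto simp: Aset_def)
  have E_eq: "exp_lambda ?g = exp_lambda f"
    unfolding exp_lambda_def[abs_def] mass_in_def[abs_def] rho_profile_phase[OF k rho_le] ..
  have "exp_lambda f \<in> borel_measurable borel"
    using tm by (intro borel_measurable_exp_lambda) simp
  moreover have E: "0 \<le> exp_lambda f r" "exp_lambda f r \<le> ?C" for r
    using exp_lambda_bounds[OF mass \<beta>, of r] by simp_all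
  moreover have "0 \<le> ?C"
    using \<beta> by simp
  ultimately show ?thesis
    unfolding Dfun_def E_eq using fm f0 tm gm g0 tmg
    by (intro enn2ereal_diff_le nn_integral_weighted_chi_profile_phase_le[OF k fm f0 rho_le]
        weighted_phase_integral_finite[where C = ?C and w = "exp_lambda f"]) simp_all
qed

lemma P0_ge:
  assumes k: "0 < k" and \<beta>: "0 \<le> \<beta>" "\<beta> < 1/2"
  shows "8 * (k + 1) \<le> P0 k M \<beta>"
proof -
  have "8 * (k + 1) * 1 \<le> 64 * (k + 1) * (k + 1)"
    using k by (intro mult_mono) auto
  also have "\<dots> \<le> 64 * (k + 1)\<^sup>2 / (1 - 2 * \<beta>)"
    using \<beta> k by (simp add: field_simps power2_eq_square)
  also have "\<dots> \<le> P0 k M \<beta>"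
    unfolding P0_def by simp
  finally show ?thesis by simp
qed

theorem corollary3p3:
  fixes k M \<beta> :: real and f :: phase
  assumes "k > 0" and "M > 0" and "0 < \<beta>" and "\<beta> < 1/2"
    and "\<forall>x v. f x v \<ge> 0" and "sph_sym f" and "f \<in> Aset M \<beta>"
  shows "\<exists>g :: phase. (\<forall>x v. g x v \<ge> 0) \<and> sph_sym g \<and> meas_phase g
     \<and> rho g = rho f \<and> g \<in> Aset M \<beta>
     \<and> Dfun k g \<le> Dfun k f
     \<and> (\<forall>x v. g x v \<le> 1)
     \<and> (\<forall>P \<ge> P0 k M \<beta> + 1.
          (\<integral>\<^sup>+ x. \<integral>\<^sup>+ v. indicator {v. norm v \<ge> P + 1} v
              * ennreal (sqrt (1 + (norm v)\<^sup>2) * g x v) \<partial>lborel \<partial>lborel)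
          \<le> ennreal (2 / P powr (1/4)))"
proof (intro exI conjI allI impI)
  \<comment> \<open>M > 0, f \<ge> 0 and sph_sym f are already part of f \<in> Aset M \<beta>.\<close>
  let ?g = "profile_phase k f"
  have k: "0 < k" and f: "f \<in> Aset M \<beta>"
    using assms by simp_all
  show "?g \<in> Aset M \<beta>"
    using profile_phase_in_Aset[OF k f] .
  then show "meas_phase ?g" "sph_sym ?g"
    by (simp_all add: Aset_def)
  show "rho ?g = rho f"
    using f by (intro rho_profile_phase[OF k]) (simp add: Aset_def)
  show "Dfun k ?g \<le> Dfun k f"
    using Dfun_profile_phase_le[OF k f] assms(3,4) .
  show "0 \<le> ?g x v" "?g x v \<le> 1" for x v
    using k by (simp_all add: profile_phase_nonneg profile_phase_le_1)
  fix P
  assume "P0 k M \<beta> + 1 \<le> P"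
  then have "?g x v = 0" if "P + 1 \<le> norm v" for x v
    using P0_ge[OF k, of \<beta> M] assms(3,4) that by (intro profile_phase_eq_0[OF k]) simp_all
  then have tail_0: "indicator {v. P + 1 \<le> norm v} v * ennreal (sqrt (1 + (norm v)\<^sup>2) * ?g x v) = 0"
    for x v by (cases "P + 1 \<le> norm v") simp_all
  show "(\<integral>\<^sup>+ x. \<integral>\<^sup>+ v. indicator {v. P + 1 \<le> norm v} v
      * ennreal (sqrt (1 + (norm v)\<^sup>2) * ?g x v) \<partial>lborel \<partial>lborel)
      \<le> ennreal (2 / P powr (1/4))"
    by (simp only: tail_0) simp
qed

end
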